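(* For all integers $m\ge1$ and $q\ge1$, the Jacobian determinant of the polynomial map $\mathbb R^m\to\mathbb R^m$, $\xi\mapsto\nabla_\xi A_{q+1}(\xi)-(q+1)^2A_q(\xi)\underline1$, is a nonzero polynomial in $\xi$; consequently this map is a local diffeomorphism outside the real algebraic hypersurface where this determinant vanishes.
   Context: $A_r(\xi_1,\dots,\xi_m)=\sum_{k\in\mathbb N^m,\ \sum_ik_i=r}\binom{r}{k_1,\dots,k_m}^2\prod_i\xi_i^{k_i}$ (multinomial coefficients); $\underline1=(1,\dots,1)\in\mathbb R^m$. *)

theory Defs
  imports "HOL-Analysis.Analysis"
begin

definition multinom :: "nat \<Rightarrow> ('m::finite \<Rightarrow> nat) \<Rightarrow> real" where
  "multinom r k = fact r / (\<Prod>i\<in>UNIV. fact (k i))"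

definition A_poly :: "nat \<Rightarrow> real^'m::finite \<Rightarrow> real" where
  "A_poly r \<xi> = (\<Sum>k\<in>{k::'m\<Rightarrow>nat. (\<Sum>i\<in>UNIV. k i) = r}.
      (multinom r k)\<^sup>2 * (\<Prod>i\<in>UNIV. (\<xi> $ i) ^ k i))"

definition pdiff :: "(real^'m::finite \<Rightarrow> real) \<Rightarrow> 'm \<Rightarrow> real^'m \<Rightarrow> real" where
  "pdiff f j x = deriv (\<lambda>t. f (x + t *\<^sub>R axis j 1)) 0"

definition grad :: "(real^'m::finite \<Rightarrow> real) \<Rightarrow> real^'m \<Rightarrow> real^'m" where
  "grad f x = (\<chi> j. pdiff f j x)"

definition jacobian :: "(real^'m::finite \<Rightarrow> real^'n::finite) \<Rightarrow> real^'m \<Rightarrow> real^'m^'n" where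
  "jacobian F x = (\<chi> i j. pdiff (\<lambda>y. F y $ i) j x)"

definition Fmap :: "nat \<Rightarrow> real^'m::finite \<Rightarrow> real^'m" where
  "Fmap q \<xi> = grad (A_poly (Suc q)) \<xi> - ((real (Suc q))\<^sup>2 * A_poly q \<xi>) *\<^sub>R (\<chi> i. 1)"

fun Ck_on :: "nat \<Rightarrow> (real^'n::finite) set \<Rightarrow> (real^'n \<Rightarrow> real) \<Rightarrow> bool" where
  "Ck_on 0 S f = continuous_on S f"
| "Ck_on (Suc k) S f = (continuous_on S f \<and>
     (\<forall>j. \<exists>g. (\<forall>x\<in>S. ((\<lambda>t. f (x + t *\<^sub>R axis j 1)) has_real_derivative g x) (at 0))
              \<and> Ck_on k S g))"

definition smooth_map_on :: "(real^'n::finite) set \<Rightarrow> (real^'n \<Rightarrow> real^'m::finite) \<Rightarrow> bool" where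
  "smooth_map_on S F = (\<forall>k i. Ck_on k S (\<lambda>x. F x $ i))"

definition local_diffeo_at :: "(real^'n::finite \<Rightarrow> real^'n) \<Rightarrow> real^'n \<Rightarrow> bool" where
  "local_diffeo_at F x = (\<exists>U V g. open U \<and> x \<in> U \<and> open V \<and> F ` U = V \<and>
      (\<forall>y\<in>U. g (F y) = y) \<and> (\<forall>z\<in>V. F (g z) = z) \<and>
      smooth_map_on U F \<and> smooth_map_on V g)"

end

theory Submission
  imports Defs
begin

(* Write F_q(xi) = grad A_{q+1}(xi) - (q+1)^2 A_q(xi) 1 and q = m + 1.

   The components of F_q and the entries of its Jacobian are
   explicit polynomials, so det J_{F_q} is a polynomial; it is not the zero polynomial
   because it is nonzero at a unit vector e_a.  At e_a only the multi-indices
   m e_a + e_j (from A_q) and m e_a + e_i + e_j (from A_{q+1}) contribute; every row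
   i <> a of J_{F_q}(e_a) vanishes off the diagonal, so det J_{F_q}(e_a) is the product
   of the diagonal entries, and these are nonzero.

   We use C^k in the Frechet sense (continuous, differentiable,
   with C^(k-1) partial derivatives), which is closed under sums, products, inverses
   and composition and implies the coordinatewise notion Ck_on.  A map with smooth
   components and invertible Jacobian at x0 is a local diffeomorphism at x0: the
   inverse function theorem gives a differentiable local inverse g, Cramer's rule
   writes the partials of g as smooth functions of g, and induction on k shows that g
   is C^k for every k.  Polynomials are smooth, which yields the second claim. *)


section \<open>Frechet C^k functions\<close>

fun Cdiff :: "nat \<Rightarrow> (real^'n::finite) set \<Rightarrow> (real^'n \<Rightarrow> real) \<Rightarrow> bool" where
  "Cdiff 0 S f = continuous_on S f"
| "Cdiff (Suc k) S f = (continuous_on S f \<and> (\<exists>D. (\<forall>x\<in>S. (f has_derivative D x) (at x)) \<and>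
      (\<forall>j. Cdiff k S (\<lambda>x. D x (axis j 1)))))"

definition smooth_on :: "(real^'n::finite) set \<Rightarrow> (real^'n \<Rightarrow> real) \<Rightarrow> bool" where
  "smooth_on S f = (\<forall>k. Cdiff k S f)"

lemma Cdiff_cont: "Cdiff k S f \<Longrightarrow> continuous_on S f"
  by (cases k) auto

lemma Cdiff_Suc_imp: "Cdiff (Suc k) S f \<Longrightarrow> Cdiff k S f"
proof (induction k arbitrary: f)
  case 0 then show ?case by auto
next
  case (Suc k)
  then obtain D where "continuous_on S f" "\<forall>x\<in>S. (f has_derivative D x) (at x)"
     "\<forall>j. Cdiff (Suc k) S (\<lambda>x. D x (axis j 1))" by auto
  then show ?case using Suc.IH by auto
qed

lemma Cdiff_subset: "Cdiff k S f \<Longrightarrow> T \<subseteq> S \<Longrightarrow> Cdiff k T f"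
proof (induction k arbitrary: f)
  case 0 then show ?case by (auto intro: continuous_on_subset)
next
  case (Suc k)
  then obtain D where "continuous_on S f" "\<forall>x\<in>S. (f has_derivative D x) (at x)"
     "\<forall>j. Cdiff k S (\<lambda>x. D x (axis j 1))" by auto
  with Suc.IH Suc.prems(2) show ?case
    by (simp only: Cdiff.simps) (blast intro: continuous_on_subset)
qed

lemma Cdiff_cong: "open S \<Longrightarrow> Cdiff k S f \<Longrightarrow> (\<And>x. x \<in> S \<Longrightarrow> f x = g x) \<Longrightarrow> Cdiff k S g"
proof (induction k arbitrary: f g)
  case 0 then show ?case using continuous_on_cong by force
next
  case (Suc k)
  from Suc.prems obtain D where c: "continuous_on S f" and d: "\<forall>x\<in>S. (f has_derivative D x) (at x)"
     and p: "\<forall>j. Cdiff k S (\<lambda>x. D x (axis j 1))"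
    by auto
  have "continuous_on S g" using c Suc.prems continuous_on_cong by force
  moreover have "\<forall>x\<in>S. (g has_derivative D x) (at x)"
    using d Suc.prems by (auto intro: has_derivative_transform_within_open[of f _ _ UNIV S])
  ultimately show ?case using p by (simp only: Cdiff.simps) blast
qed

lemma Cdiff_const: "Cdiff k S (\<lambda>x. c)"
proof (induction k arbitrary: c)
  case 0 then show ?case by auto
next
  case (Suc k) show ?case by (auto intro!: exI[of _ "\<lambda>x v. 0"] Suc)
qed

lemma Cdiff_coord: "Cdiff k S (\<lambda>x. x $ i)"
proof (cases k)
  case 0 then show ?thesis by (auto intro!: continuous_intros)
next
  case (Suc k)
  show ?thesis unfolding Suc
    by (auto intro!: exI[of _ "\<lambda>x v. v $ i"] Cdiff_const continuous_intros
       bounded_linear_imp_has_derivative[OF bounded_linear_vec_nth])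
qed

lemma Cdiff_add: "Cdiff k S f \<Longrightarrow> Cdiff k S g \<Longrightarrow> Cdiff k S (\<lambda>x. f x + g x)"
proof (induction k arbitrary: f g)
  case 0 then show ?case by (auto intro!: continuous_intros)
next
  case (Suc k)
  from Suc.prems obtain D1 D2 where
    "continuous_on S f" "\<forall>x\<in>S. (f has_derivative D1 x) (at x)" "\<forall>j. Cdiff k S (\<lambda>x. D1 x (axis j 1))"
    "continuous_on S g" "\<forall>x\<in>S. (g has_derivative D2 x) (at x)" "\<forall>j. Cdiff k S (\<lambda>x. D2 x (axis j 1))"
    by auto
  then show ?case
    by (auto intro!: exI[of _ "\<lambda>x v. D1 x v + D2 x v"] Suc.IH continuous_intros derivative_intros)
qed

lemma Cdiff_mult: "Cdiff k S f \<Longrightarrow> Cdiff k S g \<Longrightarrow> Cdiff k S (\<lambda>x. f x * g x)"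
proof (induction k arbitrary: f g)
  case 0 then show ?case by (auto intro!: continuous_intros)
next
  case (Suc k)
  from Suc.prems obtain D1 D2 where
    "continuous_on S f" "\<forall>x\<in>S. (f has_derivative D1 x) (at x)" "\<forall>j. Cdiff k S (\<lambda>x. D1 x (axis j 1))"
    "continuous_on S g" "\<forall>x\<in>S. (g has_derivative D2 x) (at x)" "\<forall>j. Cdiff k S (\<lambda>x. D2 x (axis j 1))"
    by auto
  moreover have "Cdiff k S f" "Cdiff k S g" using Suc.prems Cdiff_Suc_imp by blast+
  ultimately show ?case
    by (auto intro!: exI[of _ "\<lambda>x v. f x * D2 x v + D1 x v * g x"] Suc.IH Cdiff_add
        continuous_intros derivative_intros)
qed

lemma Cdiff_uminus: "Cdiff k S f \<Longrightarrow> Cdiff k S (\<lambda>x. - f x)"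
  using Cdiff_mult[OF Cdiff_const[of k S "-1"]] by simp

lemma Cdiff_sum: "finite A \<Longrightarrow> (\<And>a. a \<in> A \<Longrightarrow> Cdiff k S (f a)) \<Longrightarrow> Cdiff k S (\<lambda>x. \<Sum>a\<in>A. f a x)"
  by (induction A rule: finite_induct) (simp_all add: Cdiff_const Cdiff_add)

lemma Cdiff_prod: "finite A \<Longrightarrow> (\<And>a. a \<in> A \<Longrightarrow> Cdiff k S (f a)) \<Longrightarrow> Cdiff k S (\<lambda>x. \<Prod>a\<in>A. f a x)"
  by (induction A rule: finite_induct) (simp_all add: Cdiff_const Cdiff_mult)

lemma Cdiff_power: "Cdiff k S f \<Longrightarrow> Cdiff k S (\<lambda>x. f x ^ n)"
  by (induction n) (simp_all add: Cdiff_const Cdiff_mult)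

lemma Cdiff_inverse: "Cdiff k S f \<Longrightarrow> (\<And>x. x \<in> S \<Longrightarrow> f x \<noteq> 0) \<Longrightarrow> Cdiff k S (\<lambda>x. inverse (f x))"
proof (induction k arbitrary: f)
  case 0 then show ?case by (auto intro!: continuous_on_inverse)
next
  case (Suc k)
  from Suc.prems obtain D where c: "continuous_on S f" and d: "\<forall>x\<in>S. (f has_derivative D x) (at x)"
     and p: "\<forall>j. Cdiff k S (\<lambda>x. D x (axis j 1))"
    by auto
  define E where "E x h = - (inverse (f x) * D x h * inverse (f x))" for x h
  have "Cdiff k S (\<lambda>x. inverse (f x))" using Suc Cdiff_Suc_imp by blast
  then have "\<forall>j. Cdiff k S (\<lambda>x. E x (axis j 1))"
    using p unfolding E_def by (intro allI Cdiff_uminus Cdiff_mult) auto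
  moreover have "continuous_on S (\<lambda>x. inverse (f x))"
    using c Suc.prems(2) by (intro continuous_on_inverse) auto
  moreover have "\<forall>x\<in>S. ((\<lambda>x. inverse (f x)) has_derivative E x) (at x)"
    using d Suc.prems(2) unfolding E_def by (auto intro: has_derivative_inverse)
  ultimately show ?case by auto
qed

(* The determinant is a polynomial in the entries, hence C^k when the entries are. *)
lemma Cdiff_det:
  fixes M :: "real^'n::finite \<Rightarrow> real^'m::finite^'m"
  shows "(\<And>r c. Cdiff k S (\<lambda>x. M x $ r $ c)) \<Longrightarrow> Cdiff k S (\<lambda>x. det (M x))"
  unfolding det_def
  by (intro Cdiff_sum Cdiff_mult Cdiff_const Cdiff_prod finite_permutations) auto

lemma line_deriv:
  assumes "(f has_derivative D) (at x)"
  shows "((\<lambda>t. f (x + t *\<^sub>R v)) has_real_derivative D v) (at 0)"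
proof -
  have l: "((\<lambda>t::real. x + t *\<^sub>R v) has_derivative (\<lambda>t. t *\<^sub>R v)) (at 0)"
    by (auto intro!: derivative_eq_intros)
  have "(f has_derivative D) (at ((\<lambda>t::real. x + t *\<^sub>R v) 0))" using assms by simp
  from has_derivative_compose[OF l this]
  have "((\<lambda>t. f (x + t *\<^sub>R v)) has_derivative (\<lambda>t. D (t *\<^sub>R v))) (at 0)" by (simp add: o_def)
  moreover have "(\<lambda>t. D (t *\<^sub>R v)) = (*) (D v)"
    using has_derivative_bounded_linear[OF assms] by (auto simp: linear_scale bounded_linear.linear)
  ultimately show ?thesis by (simp add: has_field_derivative_def)
qed

lemma pdiff_eq:
  assumes "(f has_derivative D) (at x)"
  shows "pdiff f j x = D (axis j 1)"
  unfolding pdiff_def using line_deriv[OF assms] by (rule DERIV_imp_deriv)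

lemma Cdiff_imp_Ck_on: "Cdiff k S f \<Longrightarrow> Ck_on k S f"
proof (induction k arbitrary: f)
  case 0 then show ?case by simp
next
  case (Suc k)
  from Suc.prems obtain D where c: "continuous_on S f" and d: "\<forall>x\<in>S. (f has_derivative D x) (at x)"
     and p: "\<forall>j. Cdiff k S (\<lambda>x. D x (axis j 1))"
    by auto
  show ?case
  proof (simp only: Ck_on.simps, intro conjI allI c)
    fix j
    show "\<exists>g. (\<forall>x\<in>S. ((\<lambda>t. f (x + t *\<^sub>R axis j 1)) has_real_derivative g x) (at 0)) \<and> Ck_on k S g"
      using d p Suc.IH line_deriv by (intro exI[of _ "\<lambda>x. D x (axis j 1)"]) blast
  qed
qed

(* A smooth function has a derivative whose partials are again smooth; on an open set
   the derivative is unique, so the same D works for every order k. *)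
lemma smooth_deriv:
  assumes "open S" "smooth_on S f"
  shows "\<exists>D. (\<forall>x\<in>S. (f has_derivative D x) (at x)) \<and> (\<forall>j. smooth_on S (\<lambda>x. D x (axis j 1)))"
proof -
  from assms(2) have "Cdiff (Suc 0) S f" by (simp add: smooth_on_def)
  then obtain D where d: "\<forall>x\<in>S. (f has_derivative D x) (at x)" by auto
  have "Cdiff k S (\<lambda>x. D x (axis j 1))" for j k
  proof -
    from assms(2) have "Cdiff (Suc k) S f" by (simp add: smooth_on_def)
    then obtain D' where d': "\<forall>x\<in>S. (f has_derivative D' x) (at x)"
      and p: "\<forall>j. Cdiff k S (\<lambda>x. D' x (axis j 1))" by auto
    have "\<forall>x\<in>S. D' x = D x" using d d' has_derivative_unique by blast
    then show ?thesis using p Cdiff_cong[OF assms(1)] by metis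
  qed
  then show ?thesis using d unfolding smooth_on_def by blast
qed

lemma has_derivative_vec_comp:
  fixes h :: "'a::real_normed_vector \<Rightarrow> real^'n::finite"
  assumes "\<And>i. ((\<lambda>x. h x $ i) has_derivative D i) (at x)"
  shows "(h has_derivative (\<lambda>v. \<chi> i. D i v)) (at x)"
  by (rule iffD2[OF has_derivative_componentwise_within]) (auto simp: Basis_vec_def inner_axis assms)

lemma linear_functional_expand:
  assumes "bounded_linear (L::real^'n::finite \<Rightarrow> real)"
  shows "L v = (\<Sum>j\<in>UNIV. L (axis j 1) * v $ j)"
proof -
  have "L v = L (\<Sum>j\<in>UNIV. (v $ j) *\<^sub>R axis j 1)"
    using basis_expansion[of v] by (simp add: scalar_mult_eq_scaleR)
  also have "\<dots> = (\<Sum>j\<in>UNIV. v $ j * L (axis j 1))"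
    using assms by (simp add: linear_sum linear_scale bounded_linear.linear)
  finally show ?thesis by (simp add: mult.commute)
qed

lemma Cdiff_comp:
  assumes "open S" "smooth_on T \<phi>" "open T" "\<And>x. x \<in> S \<Longrightarrow> h x \<in> T" "\<And>i. Cdiff k S (\<lambda>x. h x $ i)"
  shows "Cdiff k S (\<lambda>x. \<phi> (h x))"
  using assms(2,5)
proof (induction k arbitrary: \<phi>)
  case 0
  have "continuous_on S (\<lambda>x. \<chi> i. h x $ i)" using 0 by (intro continuous_on_vec_lambda) simp
  moreover have "continuous_on T \<phi>" using 0 by (simp add: smooth_on_def Cdiff_cont)
  ultimately show ?case using assms(4) unfolding Cdiff.simps
    by (intro continuous_on_compose2[of T \<phi> S h]) auto
next
  case (Suc k)
  obtain D\<phi> where d\<phi>: "\<forall>y\<in>T. (\<phi> has_derivative D\<phi> y) (at y)"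
    and p\<phi>: "\<forall>i. smooth_on T (\<lambda>y. D\<phi> y (axis i 1))"
    using smooth_deriv[OF assms(3) Suc.prems(1)] by blast
  have "\<exists>Dh. (\<forall>x\<in>S. ((\<lambda>x. h x $ i) has_derivative Dh x) (at x)) \<and> (\<forall>j. Cdiff k S (\<lambda>x. Dh x (axis j 1)))" for i
    using Suc.prems(2)[of i] by auto
  then obtain Dh where dh: "\<And>i. \<forall>x\<in>S. ((\<lambda>x. h x $ i) has_derivative Dh i x) (at x)"
    and ph: "\<And>i j. Cdiff k S (\<lambda>x. Dh i x (axis j 1))" by metis
  have hk: "\<And>i. Cdiff k S (\<lambda>x. h x $ i)" using Suc.prems(2) Cdiff_Suc_imp by blast
  define E where "E x v = D\<phi> (h x) (\<chi> i. Dh i x v)" for x v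
  have der: "((\<lambda>x. \<phi> (h x)) has_derivative E x) (at x)" if "x \<in> S" for x
  proof -
    have "(h has_derivative (\<lambda>v. \<chi> i. Dh i x v)) (at x)"
      using dh that by (intro has_derivative_vec_comp) auto
    moreover have "(\<phi> has_derivative D\<phi> (h x)) (at (h x))" using d\<phi> assms(4) that by auto
    ultimately show ?thesis using has_derivative_compose unfolding E_def o_def by fast
  qed
  have chain: "E x (axis j 1) = (\<Sum>i\<in>UNIV. D\<phi> (h x) (axis i 1) * Dh i x (axis j 1))" if "x \<in> S" for x j
  proof -
    have "bounded_linear (D\<phi> (h x))"
      using d\<phi> assms(4)[OF that] has_derivative_bounded_linear by blast
    then show ?thesis unfolding E_def by (subst linear_functional_expand) simp_all
  qed
  have "Cdiff k S (\<lambda>x. \<Sum>i\<in>UNIV. D\<phi> (h x) (axis i 1) * Dh i x (axis j 1))" for j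
    using Suc.IH[OF p\<phi>[rule_format] hk] ph by (intro Cdiff_sum Cdiff_mult) auto
  then have "Cdiff k S (\<lambda>x. E x (axis j 1))" for j
    using chain Cdiff_cong[OF assms(1)] by (metis (no_types, lifting))
  moreover have "continuous_on S (\<lambda>x. \<phi> (h x))"
    using Cdiff_cont Suc.IH[OF Suc.prems(1) hk] by blast
  ultimately show ?case using der unfolding Cdiff.simps by blast
qed


section \<open>Smooth local inverses\<close>

lemma has_derivative_jacobian:
  fixes F :: "real^'m::finite \<Rightarrow> real^'n::finite"
  assumes d: "\<And>i. ((\<lambda>y. F y $ i) has_derivative D i) (at x)"
  shows "(F has_derivative (\<lambda>v. jacobian F x *v v)) (at x)"
proof -
  have "(F has_derivative (\<lambda>v. \<chi> i. D i v)) (at x)"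
    using d by (rule has_derivative_vec_comp)
  moreover have "(\<lambda>v. \<chi> i. D i v) = (\<lambda>v. jacobian F x *v v)"
  proof
    fix v
    have "D i v = (\<Sum>j\<in>UNIV. jacobian F x $ i $ j * v $ j)" for i
      using linear_functional_expand[OF has_derivative_bounded_linear[OF d[of i]], of v] pdiff_eq[OF d[of i]]
      by (simp add: jacobian_def)
    then show "(\<chi> i. D i v) = jacobian F x *v v" by (simp add: matrix_vector_mult_def)
  qed
  ultimately show ?thesis by simp
qed

lemma smooth_jacobian:
  fixes F :: "real^'m::finite \<Rightarrow> real^'n::finite"
  assumes S: "open S" and smooth: "\<And>i. smooth_on S (\<lambda>x. F x $ i)"
  shows "\<And>x. x \<in> S \<Longrightarrow> (F has_derivative (\<lambda>v. jacobian F x *v v)) (at x)"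
    and "\<And>i j. smooth_on S (\<lambda>x. jacobian F x $ i $ j)"
proof -
  have "\<forall>i. \<exists>D. (\<forall>x\<in>S. ((\<lambda>x. F x $ i) has_derivative D x) (at x)) \<and>
                (\<forall>j. smooth_on S (\<lambda>x. D x (axis j 1)))"
    using smooth_deriv[OF S smooth] by blast
  then obtain D where "\<forall>i. (\<forall>x\<in>S. ((\<lambda>x. F x $ i) has_derivative D i x) (at x)) \<and>
                         (\<forall>j. smooth_on S (\<lambda>x. D i x (axis j 1)))"
    by (rule choice[THEN exE])
  then have D: "\<And>i x. x \<in> S \<Longrightarrow> ((\<lambda>x. F x $ i) has_derivative D i x) (at x)"
    and smooth_D: "\<And>i j k. Cdiff k S (\<lambda>x. D i x (axis j 1))"
    unfolding smooth_on_def by blast+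
  have entry: "jacobian F x $ i $ j = D i x (axis j 1)" if "x \<in> S" for x i j
    using pdiff_eq[OF D[OF that]] by (simp add: jacobian_def)
  show "(F has_derivative (\<lambda>v. jacobian F x *v v)) (at x)" if "x \<in> S" for x
    using D[OF that] by (rule has_derivative_jacobian)
  show "smooth_on S (\<lambda>x. jacobian F x $ i $ j)" for i j
    unfolding smooth_on_def
    by (intro allI Cdiff_cong[OF S smooth_D]) (simp add: entry)
qed

(* Cramer's rule with smooth data: the entries of the solution of J x *v v = b are
   ratios of determinants, hence smooth wherever J is smooth and invertible. *)
lemma smooth_cramer_entry:
  fixes J :: "real^'n::finite \<Rightarrow> real^'n^'n"
  assumes smooth_J: "\<And>r c. smooth_on W (\<lambda>x. J x $ r $ c)"
    and det_J: "\<And>x. x \<in> W \<Longrightarrow> det (J x) \<noteq> 0"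
  shows "smooth_on W (\<lambda>x. det (\<chi> r c. if c = i then b $ r else J x $ r $ c) / det (J x))"
proof -
  have "Cdiff k W (\<lambda>x. (\<chi> r c. if c = i then b $ r else J x $ r $ c) $ r $ c)" for k r c
    using smooth_J unfolding smooth_on_def by (cases "c = i") (simp_all add: Cdiff_const)
  then show ?thesis
    using smooth_J det_J unfolding smooth_on_def divide_inverse
    by (intro allI Cdiff_mult Cdiff_inverse Cdiff_det) auto
qed

(* Bootstrapping the regularity of an inverse: if the derivative of g inverts a smooth
   invertible matrix field J along g, then by Cramer's rule the partials of g are smooth
   functions of g, so g being C^k makes it C^(k+1). *)
lemma smooth_inverse_bootstrap:
  fixes g :: "real^'n::finite \<Rightarrow> real^'n" and J :: "real^'n \<Rightarrow> real^'n^'n"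
  assumes V: "open V" and W: "open W" and gW: "\<And>y. y \<in> V \<Longrightarrow> g y \<in> W"
    and cont: "continuous_on V g" and dg: "\<And>y. y \<in> V \<Longrightarrow> (g has_derivative g' y) (at y)"
    and inv: "\<And>y v. y \<in> V \<Longrightarrow> J (g y) *v g' y v = v"
    and smooth_J: "\<And>r c. smooth_on W (\<lambda>x. J x $ r $ c)"
    and det_J: "\<And>x. x \<in> W \<Longrightarrow> det (J x) \<noteq> 0"
  shows "smooth_on V (\<lambda>y. g y $ i)"
proof -
  define \<psi> where "\<psi> i j x = det (\<chi> r c. if c = i then axis j 1 $ r else J x $ r $ c) / det (J x)"
    for i j x
  have smooth_\<psi>: "smooth_on W (\<psi> i j)" for i j
    unfolding \<psi>_def using smooth_J det_J by (rule smooth_cramer_entry)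
  have partial_g: "g' y (axis j 1) $ i = \<psi> i j (g y)" if y: "y \<in> V" for y i j
  proof -
    have "g' y (axis j 1) = (\<chi> k. det (\<chi> r c. if c = k then axis j 1 $ r else J (g y) $ r $ c) / det (J (g y)))"
      using cramer[OF det_J[OF gW[OF y]]] inv[OF y] by blast
    then show ?thesis by (simp add: \<psi>_def)
  qed
  have "\<forall>i. Cdiff k V (\<lambda>y. g y $ i)" for k
  proof (induction k)
    case 0 then show ?case using cont by (auto intro: continuous_on_component)
  next
    case (Suc k)
    show ?case
    proof
      fix i
      have "Cdiff k V (\<lambda>y. g' y (axis j 1) $ i)" for j
      proof -
        have "Cdiff k V (\<lambda>y. \<psi> i j (g y))"
          by (rule Cdiff_comp[OF V smooth_\<psi> W]) (use gW Suc.IH in auto)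
        then show ?thesis using Cdiff_cong[OF V] partial_g by (metis (no_types, lifting))
      qed
      moreover have "\<forall>y\<in>V. ((\<lambda>y. g y $ i) has_derivative (\<lambda>v. g' y v $ i)) (at y)"
        using dg bounded_linear.has_derivative[OF bounded_linear_vec_nth[of i]] by blast
      moreover have "continuous_on V (\<lambda>y. g y $ i)" using cont by (auto intro: continuous_on_component)
      ultimately show "Cdiff (Suc k) V (\<lambda>y. g y $ i)" unfolding Cdiff.simps
        by (intro conjI exI[of _ "\<lambda>y v. g' y v $ i"]) auto
    qed
  qed
  then show ?thesis by (simp add: smooth_on_def)
qed

lemma matrix_blinfun_left_inverse:
  fixes A :: "real^'n::finite^'n"
  assumes "det A \<noteq> 0"
  shows "\<exists>L. L o\<^sub>L Blinfun (\<lambda>v. A *v v) = id_blinfun"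
proof -
  obtain B where B: "B ** A = mat 1"
    using assms unfolding invertible_det_nz[symmetric] invertible_def by blast
  have "Blinfun (\<lambda>v. B *v v) o\<^sub>L Blinfun (\<lambda>v. A *v v) = id_blinfun"
    by (rule blinfun_eqI) (simp add: bounded_linear_Blinfun_apply matrix_vector_mul_assoc B)
  then show ?thesis by blast
qed

lemma jacobian_local_inverse:
  fixes F :: "real^'n::finite \<Rightarrow> real^'n" and J :: "real^'n \<Rightarrow> real^'n^'n"
  assumes W: "open W" "x0 \<in> W"
    and derF: "\<And>x. x \<in> W \<Longrightarrow> (F has_derivative (\<lambda>v. J x *v v)) (at x)"
    and cont_J: "\<And>r c. continuous_on W (\<lambda>x. J x $ r $ c)"
    and det_x0: "det (J x0) \<noteq> 0"
  obtains U V g g' where "open U" "U \<subseteq> W" "x0 \<in> U" "open V" "homeomorphism U V F g"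
    "\<And>y. y \<in> V \<Longrightarrow> (g has_derivative g' y) (at y)"
    "\<And>y v. y \<in> V \<Longrightarrow> J (g y) *v g' y v = v"
proof -
  define f' where "f' x = Blinfun (\<lambda>v. J x *v v)" for x
  have f'_apply: "blinfun_apply (f' x) = (\<lambda>v. J x *v v)" for x
    unfolding f'_def by (rule bounded_linear_Blinfun_apply) simp
  have cont_f': "continuous_on W f'"
  proof (rule continuous_on_blinfun_componentwise)
    fix b :: "real^'n"
    show "continuous_on W (\<lambda>x. blinfun_apply (f' x) b)"
      unfolding f'_apply matrix_vector_mult_def
      by (intro continuous_on_vec_lambda continuous_on_sum continuous_on_mult cont_J continuous_on_const)
  qed
  have derF': "(F has_derivative blinfun_apply (f' x)) (at x)" if "x \<in> W" for x
    using derF[OF that] by (simp add: f'_apply)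
  obtain L where L: "L o\<^sub>L f' x0 = id_blinfun"
    using matrix_blinfun_left_inverse[OF det_x0] unfolding f'_def by blast
  obtain U V g g' where UV: "open U" "U \<subseteq> W" "x0 \<in> U" "open V" and "F x0 \<in> V"
    and hom: "homeomorphism U V F g" and dg: "\<And>y. y \<in> V \<Longrightarrow> (g has_derivative (g' y)) (at y)"
    and g': "\<And>y. y \<in> V \<Longrightarrow> g' y = inv (blinfun_apply (f'(g y)))"
    and bij: "\<And>y. y \<in> V \<Longrightarrow> bij (blinfun_apply (f'(g y)))"
    using inverse_function_theorem[OF W(1) derF' cont_f' W(2) L] by blast
  have "J (g y) *v g' y v = v" if "y \<in> V" for y v
    using g'[OF that] surj_f_inv_f[OF bij_is_surj[OF bij[OF that]]] by (simp add: f'_apply)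
  from UV hom dg this show ?thesis by (rule that)
qed

theorem smooth_local_diffeo:
  fixes F :: "real^'n::finite \<Rightarrow> real^'n"
  assumes S: "open S" "x0 \<in> S" and smooth_F: "\<And>i. smooth_on S (\<lambda>x. F x $ i)"
    and det_x0: "det (jacobian F x0) \<noteq> 0"
  shows "local_diffeo_at F x0"
proof -
  define J where "J = jacobian F"
  define W where "W = S \<inter> (\<lambda>x. det (J x)) -` (- {0})"
  have smooth_J: "smooth_on S (\<lambda>x. J x $ r $ c)" for r c
    unfolding J_def by (rule smooth_jacobian(2)[OF S(1) smooth_F])
  have smooth_JW: "smooth_on W (\<lambda>x. J x $ r $ c)" for r c
    using smooth_J[of r c] unfolding smooth_on_def W_def by (blast intro: Cdiff_subset)
  have "Cdiff 0 S (\<lambda>x. det (J x))"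
    using smooth_J unfolding smooth_on_def by (intro Cdiff_det) blast
  then have W_open: "open W"
    unfolding W_def using S(1) by (intro continuous_open_preimage) (auto dest: Cdiff_cont)
  have derF: "(F has_derivative (\<lambda>v. J x *v v)) (at x)" if "x \<in> W" for x
    using that unfolding J_def W_def by (intro smooth_jacobian(1)[OF S(1) smooth_F]) blast
  have cont_J: "continuous_on W (\<lambda>x. J x $ r $ c)" for r c
    using smooth_JW[of r c] Cdiff_cont unfolding smooth_on_def by blast
  have x0W: "x0 \<in> W" using S(2) det_x0 by (simp add: W_def J_def)
  obtain U V g g' where U: "open U" "U \<subseteq> W" "x0 \<in> U" and V: "open V"
    and hom: "homeomorphism U V F g" and dg: "\<And>y. y \<in> V \<Longrightarrow> (g has_derivative g' y) (at y)"
    and right_inverse: "\<And>y v. y \<in> V \<Longrightarrow> J (g y) *v g' y v = v"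
    using jacobian_local_inverse[OF W_open x0W derF cont_J] det_x0 unfolding J_def by metis
  from hom have cont_g: "continuous_on V g" and FU: "F ` U = V" and gV: "g ` V = U"
    and gF: "\<forall>x\<in>U. g (F x) = x" and Fg: "\<forall>y\<in>V. F (g y) = y"
    unfolding homeomorphism_def by auto
  have "smooth_on V (\<lambda>y. g y $ i)" for i
    using gV U(2) by (intro smooth_inverse_bootstrap[OF V W_open _ cont_g dg right_inverse smooth_JW])
      (auto simp: W_def)
  then have smooth_g: "smooth_map_on V g"
    unfolding smooth_map_on_def smooth_on_def by (blast intro: Cdiff_imp_Ck_on)
  have "smooth_on U (\<lambda>x. F x $ i)" for i
    using smooth_F[of i] U(2) unfolding smooth_on_def W_def by (blast intro: Cdiff_subset)
  then have smooth_FU: "smooth_map_on U F"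
    unfolding smooth_map_on_def smooth_on_def by (blast intro: Cdiff_imp_Ck_on)
  show ?thesis
    unfolding local_diffeo_at_def using U(1,3) V FU gF Fg smooth_FU smooth_g by blast
qed

section \<open>Polynomial functions\<close>

definition mon :: "('n::finite \<Rightarrow> nat) \<Rightarrow> real^'n \<Rightarrow> real" where
  "mon k x = (\<Prod>i\<in>UNIV. (x $ i) ^ k i)"

definition exp_box :: "nat \<Rightarrow> ('n::finite \<Rightarrow> nat) set" where
  "exp_box N = {k. \<forall>i. k i \<le> N}"

(* f is a polynomial: a finite linear combination of monomials, in exactly the shape
   used in the statement of the main theorem *)
definition is_poly :: "(real^'n::finite \<Rightarrow> real) \<Rightarrow> bool" where
  "is_poly f = (\<exists>c N. \<forall>x. f x = (\<Sum>k\<in>exp_box N. c k * mon k x))"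

lemma finite_exp_box: "finite (exp_box N :: ('n::finite \<Rightarrow> nat) set)"
proof -
  have "exp_box N \<subseteq> PiE (UNIV::'n set) (\<lambda>_. {..N})"
    by (auto simp: exp_box_def PiE_def extensional_def)
  then show ?thesis by (rule finite_subset) (intro finite_PiE, auto)
qed

lemma mon_add: "mon (\<lambda>i. a i + b i) x = mon a x * mon b x"
  by (simp add: mon_def power_add prod.distrib)

lemma poly_box_extend:
  assumes "N \<le> M"
  shows "(\<Sum>k\<in>exp_box N. c k * mon k x) = (\<Sum>k\<in>exp_box M. (if k \<in> exp_box N then c k else 0) * mon k x)"
proof -
  have "exp_box N \<subseteq> exp_box M" using assms unfolding exp_box_def using le_trans by blast
  then have "(\<Sum>k\<in>exp_box M. (if k \<in> exp_box N then c k else 0) * mon k x) =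
        (\<Sum>k\<in>exp_box N. (if k \<in> exp_box N then c k else 0) * mon k x)"
    using finite_exp_box by (intro sum.mono_neutral_right) auto
  then show ?thesis by simp
qed

lemma is_poly_large_box: "is_poly f \<Longrightarrow> \<exists>c N. N \<ge> M \<and> (\<forall>x. f x = (\<Sum>k\<in>exp_box N. c k * mon k x))"
proof -
  assume "is_poly f"
  then obtain c N where f: "\<forall>x. f x = (\<Sum>k\<in>exp_box N. c k * mon k x)" unfolding is_poly_def by blast
  show ?thesis
    using f poly_box_extend[of N "max N M" c]
    by (intro exI[of _ "\<lambda>k. if k \<in> exp_box N then c k else 0"] exI[of _ "max N M"]) auto
qed

lemma is_poly_const: "is_poly (\<lambda>x::real^'n::finite. a)"
proof -
  have box0: "exp_box 0 = {\<lambda>i::'n. 0::nat}" by (auto simp: exp_box_def)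
  show ?thesis unfolding is_poly_def
    by (intro exI[of _ "\<lambda>k. a"] exI[of _ 0]) (simp add: box0 mon_def)
qed

lemma is_poly_coord: "is_poly (\<lambda>x. x $ i)"
proof -
  let ?k = "\<lambda>l. if l = i then 1 else 0::nat"
  have k: "?k \<in> exp_box 1" by (auto simp: exp_box_def)
  have m: "mon ?k x = x $ i" for x
    by (simp add: mon_def if_distrib prod.If_cases)
  show ?thesis unfolding is_poly_def
  proof (intro exI[of _ "\<lambda>k. if k = ?k then 1 else 0"] exI[of _ 1] allI)
    fix x :: "real^'a"
    have "(\<Sum>k\<in>exp_box 1. (if k = ?k then 1 else 0) * mon k x) = (\<Sum>k\<in>exp_box 1. (if k = ?k then mon ?k x else 0))"
      by (intro sum.cong) auto
    also have "\<dots> = mon ?k x" using k by (subst sum.delta[OF finite_exp_box]) simp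
    finally show "x $ i = (\<Sum>k\<in>exp_box 1. (if k = ?k then 1 else 0) * mon k x)" using m by simp
  qed
qed

lemma is_poly_add: "is_poly f \<Longrightarrow> is_poly g \<Longrightarrow> is_poly (\<lambda>x. f x + g x)"
proof -
  assume "is_poly f" "is_poly g"
  then obtain c1 N1 where f: "\<forall>x. f x = (\<Sum>k\<in>exp_box N1. c1 k * mon k x)" unfolding is_poly_def by blast
  from \<open>is_poly g\<close> obtain c2 N2 where g: "N2 \<ge> N1" "\<forall>x. g x = (\<Sum>k\<in>exp_box N2. c2 k * mon k x)"
    using is_poly_large_box by blast
  show ?thesis unfolding is_poly_def
    using f g poly_box_extend[OF g(1), of c1]
    by (intro exI[of _ "\<lambda>k. (if k \<in> exp_box N1 then c1 k else 0) + c2 k"] exI[of _ N2])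
       (simp add: sum.distrib distrib_right)
qed

(* The product of two polynomials on the box exp_box N is a polynomial on exp_box (2 N): its
   coefficients are the convolutions of the two coefficient families. *)
lemma is_poly_mult: "is_poly f \<Longrightarrow> is_poly g \<Longrightarrow> is_poly (\<lambda>x. f x * g x)"
proof -
  assume "is_poly f" "is_poly g"
  then obtain c1 N1 where f: "\<forall>x. f x = (\<Sum>k\<in>exp_box N1. c1 k * mon k x)" unfolding is_poly_def by blast
  from \<open>is_poly g\<close> obtain c2 N where g: "N \<ge> N1" "\<forall>x. g x = (\<Sum>k\<in>exp_box N. c2 k * mon k x)"
    using is_poly_large_box by blast
  define c1' where "c1' k = (if k \<in> exp_box N1 then c1 k else 0)" for k
  have f': "\<forall>x. f x = (\<Sum>k\<in>exp_box N. c1' k * mon k x)"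
    using f poly_box_extend[OF g(1), of c1] unfolding c1'_def by simp
  define B where "B = (exp_box N :: ('a \<Rightarrow> nat) set)"
  define c where "c k = (\<Sum>p\<in>{p. p \<in> B \<times> B \<and> (\<lambda>i. fst p i + snd p i) = k}. c1' (fst p) * c2 (snd p))" for k
  have "f x * g x = (\<Sum>k\<in>exp_box (2*N). c k * mon k x)" for x
  proof -
    have "f x * g x = (\<Sum>a\<in>B. \<Sum>b\<in>B. c1' a * c2 b * mon (\<lambda>i. a i + b i) x)"
      unfolding f'[rule_format] g(2)[rule_format] B_def sum_product mon_add
      by (intro sum.cong refl) (simp add: algebra_simps)
    also have "\<dots> = (\<Sum>p\<in>B \<times> B. c1' (fst p) * c2 (snd p) * mon (\<lambda>i. fst p i + snd p i) x)"
      by (simp add: sum.cartesian_product case_prod_beta)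
    also have "\<dots> = (\<Sum>k\<in>exp_box (2*N). \<Sum>p\<in>{p. p \<in> B \<times> B \<and> (\<lambda>i. fst p i + snd p i) = k}.
                        c1' (fst p) * c2 (snd p) * mon (\<lambda>i. fst p i + snd p i) x)"
      by (rule sum.group[symmetric]) (auto simp: B_def finite_exp_box, auto simp: exp_box_def mult_2 intro: add_mono)
    also have "\<dots> = (\<Sum>k\<in>exp_box (2*N). c k * mon k x)"
      unfolding c_def sum_distrib_right by (intro sum.cong refl) auto
    finally show ?thesis .
  qed
  then show ?thesis unfolding is_poly_def by blast
qed

lemma is_poly_diff: "is_poly f \<Longrightarrow> is_poly g \<Longrightarrow> is_poly (\<lambda>x. f x - g x)"
  using is_poly_add[OF _ is_poly_mult[OF is_poly_const[of "-1"]], of f g] by simp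

lemma is_poly_sum: "finite A \<Longrightarrow> (\<And>a. a \<in> A \<Longrightarrow> is_poly (f a)) \<Longrightarrow> is_poly (\<lambda>x. \<Sum>a\<in>A. f a x)"
  by (induction A rule: finite_induct) (simp_all add: is_poly_const is_poly_add)

lemma is_poly_prod: "finite A \<Longrightarrow> (\<And>a. a \<in> A \<Longrightarrow> is_poly (f a)) \<Longrightarrow> is_poly (\<lambda>x. \<Prod>a\<in>A. f a x)"
  by (induction A rule: finite_induct) (simp_all add: is_poly_const is_poly_mult)

lemma is_poly_power: "is_poly f \<Longrightarrow> is_poly (\<lambda>x. f x ^ n)"
  by (induction n) (simp_all add: is_poly_const is_poly_mult)

lemma is_poly_monosum: "finite K \<Longrightarrow> is_poly (\<lambda>x. \<Sum>k\<in>K. w k * mon (e k) x)"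
  unfolding mon_def
  by (intro is_poly_sum is_poly_mult is_poly_const is_poly_prod is_poly_power is_poly_coord) auto

lemma is_poly_det:
  fixes M :: "real^'n::finite \<Rightarrow> real^'m::finite^'m"
  shows "(\<And>r c. is_poly (\<lambda>x. M x $ r $ c)) \<Longrightarrow> is_poly (\<lambda>x. det (M x))"
  unfolding det_def
  by (intro is_poly_sum is_poly_mult is_poly_const is_poly_prod finite_permutations) auto

lemma is_poly_smooth: "is_poly f \<Longrightarrow> smooth_on S f"
proof -
  assume "is_poly f"
  then obtain c N where "\<forall>x. f x = (\<Sum>k\<in>exp_box N. c k * mon k x)" unfolding is_poly_def by blast
  then have f: "f = (\<lambda>x. \<Sum>k\<in>exp_box N. c k * mon k x)" by auto
  show ?thesis unfolding smooth_on_def f mon_def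
    by (intro allI Cdiff_sum Cdiff_mult Cdiff_const Cdiff_prod Cdiff_power Cdiff_coord finite_exp_box) auto
qed

lemma is_poly_nonzero_coeff:
  assumes "is_poly f" "f x0 \<noteq> 0"
  shows "\<exists>c N. (\<forall>x. f x = (\<Sum>k\<in>exp_box N. c k * mon k x)) \<and> (\<exists>k\<in>exp_box N. c k \<noteq> 0)"
proof -
  obtain c N where f: "\<forall>x. f x = (\<Sum>k\<in>exp_box N. c k * mon k x)" using assms(1) unfolding is_poly_def by blast
  have "\<exists>k\<in>exp_box N. c k \<noteq> 0"
  proof (rule ccontr)
    assume "\<not> ?thesis"
    then have "f x0 = 0" using f by simp
    with assms(2) show False by blast
  qed
  with f show ?thesis by blast
qed

definition dec :: "'n \<Rightarrow> ('n \<Rightarrow> nat) \<Rightarrow> ('n \<Rightarrow> nat)" where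
  "dec j k = (\<lambda>i. if i = j then k i - 1 else k i)"

lemma mon_line:
  "((\<lambda>t. mon k (x + t *\<^sub>R axis j 1)) has_real_derivative (real (k j) * mon (dec j k) x)) (at 0)"
proof -
  define P where "P = (\<Prod>i\<in>UNIV-{j}. (x $ i) ^ k i)"
  have e1: "mon k (x + t *\<^sub>R axis j 1) = (x $ j + t) ^ k j * P" for t
  proof -
    have "mon k (x + t *\<^sub>R axis j 1) = (x $ j + t) ^ k j * (\<Prod>i\<in>UNIV-{j}. ((x + t *\<^sub>R axis j 1) $ i) ^ k i)"
      unfolding mon_def by (subst prod.remove[of UNIV j]) auto
    also have "(\<Prod>i\<in>UNIV-{j}. ((x + t *\<^sub>R axis j 1) $ i) ^ k i) = P"
      unfolding P_def by (intro prod.cong) (auto simp: axis_def)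
    finally show ?thesis .
  qed
  have e2: "mon (dec j k) x = (x $ j) ^ (k j - 1) * P"
    unfolding mon_def P_def dec_def by (subst prod.remove[of UNIV j]) (auto intro!: prod.cong)
  have "((\<lambda>t. (x $ j + t) ^ k j * P) has_real_derivative (real (k j) * (x $ j + 0) ^ (k j - 1) * 1 * P)) (at 0)"
    by (auto intro!: derivative_eq_intros)
  then show ?thesis unfolding e1 e2 by (simp add: mult.assoc)
qed

lemma monosum_line:
  assumes "finite K"
  shows "((\<lambda>t. \<Sum>k\<in>K. w k * mon (e k) (x + t *\<^sub>R axis j 1)) has_real_derivative
       (\<Sum>k\<in>K. (w k * real (e k j)) * mon (dec j (e k)) x)) (at 0)"
  using assms by (auto intro!: DERIV_sum DERIV_cmult mon_line simp: mult.assoc)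

lemma pdiff_monosum:
  assumes "finite K"
  shows "pdiff (\<lambda>x. \<Sum>k\<in>K. w k * mon (e k) x) j x = (\<Sum>k\<in>K. (w k * real (e k j)) * mon (dec j (e k)) x)"
  unfolding pdiff_def using monosum_line[OF assms] by (rule DERIV_imp_deriv)


section \<open>The polynomials A_r, the map F_q and its Jacobian\<close>

definition deg_eq :: "nat \<Rightarrow> ('n::finite \<Rightarrow> nat) set" where
  "deg_eq r = {k. (\<Sum>i\<in>UNIV. k i) = r}"

lemma finite_deg_eq: "finite (deg_eq r)"
proof -
  have "deg_eq r \<subseteq> exp_box r"
    unfolding deg_eq_def exp_box_def by (auto intro: member_le_sum[of _ UNIV, simplified])
  then show ?thesis using finite_exp_box finite_subset by blast
qed

definition A_coeff :: "nat \<Rightarrow> ('n::finite \<Rightarrow> nat) \<Rightarrow> real" where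
  "A_coeff r k = (multinom r k)\<^sup>2"

lemma A_eq: "A_poly r = (\<lambda>x. \<Sum>k\<in>deg_eq r. A_coeff r k * mon k x)"
  by (simp add: A_poly_def deg_eq_def A_coeff_def mon_def fun_eq_iff)

lemma Fmap_comp: "Fmap q x $ i = (\<Sum>k\<in>deg_eq (Suc q). (A_coeff (Suc q) k * real (k i)) * mon (dec i k) x)
     - (real (Suc q))\<^sup>2 * (\<Sum>k\<in>deg_eq q. A_coeff q k * mon k x)"
  unfolding Fmap_def grad_def A_eq
  using pdiff_monosum[OF finite_deg_eq, where w="A_coeff (Suc q)" and e="\<lambda>k. k" and j=i and x=x] by simp

lemma Fmap_line: "((\<lambda>t. Fmap q (x + t *\<^sub>R axis j 1) $ i) has_real_derivative
   ((\<Sum>k\<in>deg_eq (Suc q). (A_coeff (Suc q) k * real (k i) * real (dec i k j)) * mon (dec j (dec i k)) x)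
     - (real (Suc q))\<^sup>2 * (\<Sum>k\<in>deg_eq q. (A_coeff q k * real (k j)) * mon (dec j k) x))) (at 0)"
  unfolding Fmap_comp
  by (intro DERIV_diff DERIV_cmult
       monosum_line[OF finite_deg_eq, where w="\<lambda>k. A_coeff (Suc q) k * real (k i)" and e="dec i", simplified]
       monosum_line[OF finite_deg_eq, where w="A_coeff q" and e="\<lambda>k. k", simplified])

lemma jac_formula: "jacobian (Fmap q) x $ i $ j =
   (\<Sum>k\<in>deg_eq (Suc q). (A_coeff (Suc q) k * real (k i) * real (dec i k j)) * mon (dec j (dec i k)) x)
     - (real (Suc q))\<^sup>2 * (\<Sum>k\<in>deg_eq q. (A_coeff q k * real (k j)) * mon (dec j k) x)"
  unfolding jacobian_def pdiff_def using DERIV_imp_deriv[OF Fmap_line] by simp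

lemma is_poly_Fmap: "is_poly (\<lambda>x. Fmap q x $ i)"
  unfolding Fmap_comp by (intro is_poly_diff is_poly_mult is_poly_const is_poly_monosum finite_deg_eq)

lemma is_poly_jac: "is_poly (\<lambda>x. jacobian (Fmap q) x $ i $ j)"
  unfolding jac_formula by (intro is_poly_diff is_poly_mult is_poly_const is_poly_monosum finite_deg_eq)


section \<open>The Jacobian of F_q at a unit vector\<close>

lemma mon_axis: "mon v (axis a (1::real)) = (if \<forall>t. t \<noteq> a \<longrightarrow> v t = 0 then 1 else 0)"
proof (cases "\<forall>t. t \<noteq> a \<longrightarrow> v t = 0")
  case True
  then show ?thesis unfolding mon_def by (auto simp: axis_def intro!: prod.neutral)
next
  case False
  then obtain t where "t \<noteq> a" "v t \<noteq> 0" by auto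
  then have "(axis a (1::real) $ t) ^ v t = 0" by (simp add: axis_def)
  then have "(\<Prod>t\<in>UNIV. (axis a (1::real) $ t) ^ v t) = 0" by (intro prod_zero) auto
  then show ?thesis unfolding mon_def using False by auto
qed

lemma sum_single_support:
  "finite K \<Longrightarrow> k0 \<in> K \<Longrightarrow> (\<And>k. k \<in> K \<Longrightarrow> f k \<noteq> 0 \<Longrightarrow> k = k0) \<Longrightarrow> sum f K = f k0"
proof -
  assume K: "finite K" "k0 \<in> K" "\<And>k. k \<in> K \<Longrightarrow> f k \<noteq> 0 \<Longrightarrow> k = k0"
  have "sum f (K - {k0}) = 0" using K(3) by (intro sum.neutral) auto
  then show ?thesis using K(1,2) by (subst sum.remove[of K k0]) auto
qed

lemma eq_from_coord_and_degree:
  fixes k k0 :: "'n::finite \<Rightarrow> nat"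
  assumes "\<And>t. t \<noteq> a \<Longrightarrow> k t = k0 t" "sum k UNIV = sum k0 UNIV"
  shows "k = k0"
proof -
  have "sum k UNIV = k a + sum k (UNIV - {a})" by (subst sum.remove[of UNIV a]) auto
  moreover have "sum k0 UNIV = k0 a + sum k0 (UNIV - {a})" by (subst sum.remove[of UNIV a]) auto
  moreover have "sum k (UNIV - {a}) = sum k0 (UNIV - {a})" using assms(1) by (intro sum.cong) auto
  ultimately have "k a = k0 a" using assms(2) by simp
  then show ?thesis using assms(1) by (metis ext)
qed

lemma prod_UNIV_support:
  fixes h :: "'n::finite \<Rightarrow> 'b::comm_monoid_mult"
  shows "(\<And>t. t \<notin> A \<Longrightarrow> h t = 1) \<Longrightarrow> prod h UNIV = prod h A"
  by (rule prod.mono_neutral_right) auto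

(* the exponent m e_a + e_j: the only one of A_q (q = m + 1) that survives at e_a after
   differentiating in direction j *)
definition k1 :: "'n \<Rightarrow> nat \<Rightarrow> 'n \<Rightarrow> 'n \<Rightarrow> nat" where
  "k1 a n j = (\<lambda>t. (if t = a then n else 0) + (if t = j then 1 else 0))"

(* the exponent m e_a + e_i + e_j: the only one of A_(q+1) that survives at e_a after
   differentiating in directions i and j *)
definition k2 :: "'n \<Rightarrow> nat \<Rightarrow> 'n \<Rightarrow> 'n \<Rightarrow> 'n \<Rightarrow> nat" where
  "k2 a n i j = (\<lambda>t. (if t = a then n else 0) + (if t = i then 1 else 0) + (if t = j then 1 else 0))"

lemma degree_k1: "sum (k1 a n j) (UNIV::'n::finite set) = n + 1"
  unfolding k1_def by (simp add: sum.distrib)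

lemma degree_k2: "sum (k2 a n i j) (UNIV::'n::finite set) = n + 2"
  unfolding k2_def by (simp add: sum.distrib)

lemma jac_second_sum_at_axis:
  fixes a j :: "'n::finite"
  assumes "q = Suc m"
  shows "(\<Sum>k\<in>deg_eq q. (A_coeff q k * real (k j)) * mon (dec j k) (axis a 1)) =
     A_coeff q (k1 a m j) * real (k1 a m j j)"
proof -
  have mem: "k1 a m j \<in> deg_eq q" using degree_k1[of a m j] assms by (simp add: deg_eq_def)
  have "(\<Sum>k\<in>deg_eq q. (A_coeff q k * real (k j)) * mon (dec j k) (axis a 1)) =
        (A_coeff q (k1 a m j) * real (k1 a m j j)) * mon (dec j (k1 a m j)) (axis a 1)"
  proof (rule sum_single_support[OF finite_deg_eq mem])
    fix k :: "'n \<Rightarrow> nat" assume k: "k \<in> deg_eq q" and nz: "A_coeff q k * real (k j) * mon (dec j k) (axis a 1) \<noteq> 0"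
    then have kj: "k j \<noteq> 0" and z: "\<And>t. t \<noteq> a \<Longrightarrow> dec j k t = 0"
      by (auto simp: mon_axis split: if_splits)
    show "k = k1 a m j"
    proof (rule eq_from_coord_and_degree[of a])
      fix t :: 'n assume "t \<noteq> a"
      then show "k t = k1 a m j t" using z[of t] kj by (auto simp: dec_def k1_def split: if_splits)
    next
      show "sum k UNIV = sum (k1 a m j) UNIV" using k degree_k1[of a m j] assms by (simp add: deg_eq_def)
    qed
  qed
  moreover have "mon (dec j (k1 a m j)) (axis a 1) = 1"
    by (simp add: mon_axis dec_def k1_def)
  ultimately show ?thesis by simp
qed

lemma jac_first_sum_at_axis:
  fixes a i j :: "'n::finite"
  assumes "q = Suc m"
  shows "(\<Sum>k\<in>deg_eq (Suc q). (A_coeff (Suc q) k * real (k i) * real (dec i k j)) * mon (dec j (dec i k)) (axis a 1)) =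
     A_coeff (Suc q) (k2 a m i j) * real (k2 a m i j i) * real (dec i (k2 a m i j) j)"
proof -
  have mem: "k2 a m i j \<in> deg_eq (Suc q)" using degree_k2[of a m i j] assms by (simp add: deg_eq_def)
  have "(\<Sum>k\<in>deg_eq (Suc q). (A_coeff (Suc q) k * real (k i) * real (dec i k j)) * mon (dec j (dec i k)) (axis a 1)) =
        (A_coeff (Suc q) (k2 a m i j) * real (k2 a m i j i) * real (dec i (k2 a m i j) j))
          * mon (dec j (dec i (k2 a m i j))) (axis a 1)"
  proof (rule sum_single_support[OF finite_deg_eq mem])
    fix k :: "'n \<Rightarrow> nat" assume k: "k \<in> deg_eq (Suc q)"
      and nz: "A_coeff (Suc q) k * real (k i) * real (dec i k j) * mon (dec j (dec i k)) (axis a 1) \<noteq> 0"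
    then have ki: "k i \<noteq> 0" and kj: "dec i k j \<noteq> 0" and z: "\<And>t. t \<noteq> a \<Longrightarrow> dec j (dec i k) t = 0"
      by (auto simp: mon_axis split: if_splits)
    show "k = k2 a m i j"
    proof (rule eq_from_coord_and_degree[of a])
      fix t :: 'n assume "t \<noteq> a"
      then show "k t = k2 a m i j t" using z[of t] ki kj by (auto simp: dec_def k2_def split: if_splits)
    next
      show "sum k UNIV = sum (k2 a m i j) UNIV" using k degree_k2[of a m i j] assms by (simp add: deg_eq_def)
    qed
  qed
  moreover have "mon (dec j (dec i (k2 a m i j))) (axis a 1) = 1"
    by (simp add: mon_axis dec_def k2_def)
  ultimately show ?thesis by simp
qed

lemma jac_at_axis:
  fixes a i j :: "'n::finite"
  assumes "q = Suc m"
  shows "jacobian (Fmap q) (axis a 1) $ i $ j =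
     A_coeff (Suc q) (k2 a m i j) * real (k2 a m i j i) * real (dec i (k2 a m i j) j)
     - (real (Suc q))\<^sup>2 * (A_coeff q (k1 a m j) * real (k1 a m j j))"
  unfolding jac_formula jac_first_sum_at_axis[OF assms] jac_second_sum_at_axis[OF assms] ..

lemma fact_prod_k1_ne: "j \<noteq> a \<Longrightarrow> (\<Prod>t\<in>UNIV. fact (k1 (a::'n::finite) m j t)) = (fact m :: real)"
  by (subst prod_UNIV_support[where A="{a,j}"]) (auto simp: k1_def)

lemma fact_prod_k1_eq: "(\<Prod>t\<in>UNIV. fact (k1 (a::'n::finite) m a t)) = (fact (Suc m) :: real)"
  by (subst prod_UNIV_support[where A="{a}"]) (auto simp: k1_def)

lemma fact_prod_k2_distinct:
  "i \<noteq> a \<Longrightarrow> j \<noteq> a \<Longrightarrow> i \<noteq> j \<Longrightarrow> (\<Prod>t\<in>UNIV. fact (k2 (a::'n::finite) m i j t)) = (fact m :: real)"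
  by (subst prod_UNIV_support[where A="{a,i,j}"]) (auto simp: k2_def)

lemma fact_prod_k2_ia: "i \<noteq> a \<Longrightarrow> (\<Prod>t\<in>UNIV. fact (k2 (a::'n::finite) m i a t)) = (fact (Suc m) :: real)"
  by (subst prod_UNIV_support[where A="{a,i}"]) (auto simp: k2_def)

lemma fact_prod_k2_ii: "i \<noteq> a \<Longrightarrow> (\<Prod>t\<in>UNIV. fact (k2 (a::'n::finite) m i i t)) = (2 * fact m :: real)"
  by (subst prod_UNIV_support[where A="{a,i}"]) (auto simp: k2_def)

lemma fact_prod_k2_aa: "(\<Prod>t\<in>UNIV. fact (k2 (a::'n::finite) m a a t)) = (fact (Suc (Suc m)) :: real)"
  by (subst prod_UNIV_support[where A="{a}"]) (auto simp: k2_def)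

lemma fact_ratio_1: "fact (Suc m) / fact m = (real m + 1)"
  by (simp add: fact_Suc del: of_nat_Suc)

lemma fact_ratio_2: "fact (Suc (Suc m)) / fact m = (real m + 2) * (real m + 1)"
  by (simp add: fact_Suc field_simps del: of_nat_Suc) (simp add: algebra_simps)

lemma fact_ratio_3: "fact (Suc (Suc m)) / fact (Suc m) = (real m + 2)"
  using fact_ratio_1[of "Suc m"] by simp

lemma fact_ratio_4: "fact (Suc (Suc m)) / (2 * fact m) = (real m + 2) * (real m + 1) / 2"
  using fact_ratio_2[of m] by (simp add: field_simps)

lemmas fact_ratios = fact_ratio_1 fact_ratio_2 fact_ratio_3 fact_ratio_4

(* Every row i <> a of J_{F_q}(e_a) vanishes off the diagonal: both contributions equal
   (m+1)^2 (m+2)^2 if j <> a, and (m+1) (m+2)^2 if j = a. *)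
lemma jac_axis_offdiag:
  fixes a i j :: "'n::finite"
  assumes q: "q = Suc m" and "i \<noteq> a" "i \<noteq> j"
  shows "jacobian (Fmap q) (axis a 1) $ i $ j = 0"
proof (cases "j = a")
  case True
  show ?thesis
    unfolding True jac_at_axis[OF q] A_coeff_def multinom_def fact_prod_k2_ia[OF \<open>i \<noteq> a\<close>] fact_prod_k1_eq
    using assms by (simp add: k1_def k2_def dec_def fact_ratios del: fact_Suc)
next
  case False
  show ?thesis
    unfolding jac_at_axis[OF q] A_coeff_def multinom_def fact_prod_k2_distinct[OF \<open>i \<noteq> a\<close> False \<open>i \<noteq> j\<close>]
      fact_prod_k1_ne[OF False]
    using assms False
    by (simp add: k1_def k2_def dec_def fact_ratios del: fact_Suc) (simp add: algebra_simps power2_eq_square)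
qed

(* The diagonal entries of J_{F_q}(e_a) are -(m+1)^2 (m+2)^2 / 2 for i <> a and
   -(m+1)^2 (m+2) for i = a, in particular nonzero. *)
lemma jac_axis_diag:
  fixes a i :: "'n::finite"
  assumes q: "q = Suc m"
  shows "jacobian (Fmap q) (axis a 1) $ i $ i \<noteq> 0"
proof (cases "i = a")
  case True
  show ?thesis
    unfolding True jac_at_axis[OF q] A_coeff_def multinom_def fact_prod_k2_aa fact_prod_k1_eq
    using q by (simp add: k1_def k2_def dec_def fact_ratios del: fact_Suc)
      (simp add: algebra_simps power2_eq_square, smt (verit) of_nat_0_le_iff mult_nonneg_nonneg)
next
  case False
  show ?thesis
    unfolding jac_at_axis[OF q] A_coeff_def multinom_def fact_prod_k2_ii[OF False] fact_prod_k1_ne[OF False]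
    using q False by (simp add: k1_def k2_def dec_def fact_ratios del: fact_Suc)
      (simp add: algebra_simps power2_eq_square, smt (verit) of_nat_0_le_iff mult_nonneg_nonneg)
qed

(* A matrix whose rows other than row a vanish off the diagonal has determinant equal to
   the product of its diagonal: the only permutation with a nonzero term is the identity. *)
lemma det_rows_diagonal_except:
  fixes M :: "real^'n::finite^'n"
  assumes z: "\<And>i j. i \<noteq> a \<Longrightarrow> i \<noteq> j \<Longrightarrow> M $ i $ j = 0"
  shows "det M = (\<Prod>i\<in>UNIV. M $ i $ i)"
proof -
  define T where "T p = of_int (sign p) * (\<Prod>i\<in>UNIV. M $ i $ p i)" for p :: "'n \<Rightarrow> 'n"
  have "det M = sum T {p. p permutes UNIV}"
    by (simp add: det_def T_def)
  also have "\<dots> = T id"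
  proof (rule sum_single_support)
    show "finite {p. p permutes (UNIV::'n set)}" by (simp add: finite_permutations)
    show "id \<in> {p. p permutes (UNIV::'n set)}" by (simp add: permutes_id)
    fix p assume p: "p \<in> {p. p permutes (UNIV::'n set)}" and nz: "T p \<noteq> 0"
    have fix_i: "p i = i" if "i \<noteq> a" for i
    proof (rule ccontr)
      assume "p i \<noteq> i"
      then have "M $ i $ p i = 0" using z that by auto
      then have "(\<Prod>i\<in>UNIV. M $ i $ p i) = 0" by (intro prod_zero) auto
      then show False using nz by (simp add: T_def)
    qed
    have "p a = a"
    proof (rule ccontr)
      assume "p a \<noteq> a"
      then have "p (p a) = p a" using fix_i by auto
      with p have "p a = a" by (meson injD permutes_inj mem_Collect_eq)
      with \<open>p a \<noteq> a\<close> show False by simp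
    qed
    then show "p = id" using fix_i by (metis eq_id_iff)
  qed
  also have "\<dots> = (\<Prod>i\<in>UNIV. M $ i $ i)" by (simp add: T_def)
  finally show ?thesis .
qed

lemma det_jacobian_at_axis:
  fixes a :: "'n::finite"
  assumes "q \<ge> 1"
  shows "det (jacobian (Fmap q) (axis a 1)) \<noteq> 0"
proof -
  obtain m where q: "q = Suc m" using assms by (cases q) auto
  have "det (jacobian (Fmap q) (axis a 1)) = (\<Prod>i\<in>UNIV. jacobian (Fmap q) (axis a 1) $ i $ i)"
    using jac_axis_offdiag[OF q] by (intro det_rows_diagonal_except[of a]) auto
  also have "\<dots> \<noteq> 0" using jac_axis_diag[OF q, of a] by simp
  finally show ?thesis .
qed


theorem mainTheorem8:
  fixes q :: nat
  assumes "q \<ge> 1"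
  shows "(\<exists>(c::('m::finite \<Rightarrow> nat) \<Rightarrow> real) (N::nat).
            (\<forall>\<xi>::real^'m. det (jacobian (Fmap q) \<xi>) =
               (\<Sum>k\<in>{k::'m\<Rightarrow>nat. \<forall>i. k i \<le> N}. c k * (\<Prod>i\<in>UNIV. (\<xi> $ i) ^ k i)))
            \<and> (\<exists>k. (\<forall>i. k i \<le> N) \<and> c k \<noteq> 0))
         \<and> (\<forall>\<xi>::real^'m. det (jacobian (Fmap q) \<xi>) \<noteq> 0 \<longrightarrow> local_diffeo_at (Fmap q) \<xi>)"
proof
  have "is_poly (\<lambda>\<xi>::real^'m. det (jacobian (Fmap q) \<xi>))"
    by (intro is_poly_det is_poly_jac)
  from is_poly_nonzero_coeff[OF this det_jacobian_at_axis[OF assms]]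
  show "\<exists>(c::('m \<Rightarrow> nat) \<Rightarrow> real) N.
          (\<forall>\<xi>::real^'m. det (jacobian (Fmap q) \<xi>) =
             (\<Sum>k\<in>{k::'m\<Rightarrow>nat. \<forall>i. k i \<le> N}. c k * (\<Prod>i\<in>UNIV. (\<xi> $ i) ^ k i)))
          \<and> (\<exists>k. (\<forall>i. k i \<le> N) \<and> c k \<noteq> 0)"
    unfolding exp_box_def mon_def by blast
  show "\<forall>\<xi>::real^'m. det (jacobian (Fmap q) \<xi>) \<noteq> 0 \<longrightarrow> local_diffeo_at (Fmap q) \<xi>"
    using smooth_local_diffeo[OF open_UNIV UNIV_I is_poly_smooth[OF is_poly_Fmap]] by blast
qed

end
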